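(* Let $q$ be a prime power with $q\ge 2s$, and let $1\le t_i\le t_o\le s$. Then there exists a linear $(t_i,t_o,s,q)$-AONT.
   Context: A linear $(t_i,t_o,s,q)$-AONT is given by an invertible $s\times s$ matrix $M$ over $\mathbb{F}_q$ defining the map $\mathbf{x}\mapsto\mathbf{y}=\mathbf{x}M^{-1}$ on row vectors of $\mathbb{F}_q^s$, such that for every set $I$ of $t_i$ input coordinates and every set $J$ of $s-t_o$ output coordinates, the pair $((x_i)_{i\in I},(y_j)_{j\in J})$ takes every value in $\mathbb{F}_q^{t_i+s-t_o}$ equally often as $\mathbf{x}$ ranges over $\mathbb{F}_q^s$. Equivalently, $M$ is invertible and every $t_o\times t_i$ submatrix of $M$ has rank $t_i$. *)

theory Defs
  imports "Jordan_Normal_Form.Matrix"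
begin

text \<open>Matrices over a finite field 'a (so q = CARD('a), a prime power).
  Indices are 0-based: coordinates are {0..<s}. Vectors x in F_q^s are row vectors;
  the row-vector product x M^{-1} is computed as (M^{-1})^T *v x.\<close>

definition mat_inv_of :: "'a :: field mat \<Rightarrow> 'a mat" where
  "mat_inv_of M = (SOME B. inverts_mat M B \<and> inverts_mat B M)"

definition row_times :: "'a :: field vec \<Rightarrow> 'a mat \<Rightarrow> 'a vec" where
  "row_times x A = transpose_mat A *\<^sub>v x"

definition linear_AONT :: "nat \<Rightarrow> nat \<Rightarrow> nat \<Rightarrow> 'a :: {field, finite} mat \<Rightarrow> bool" where
  "linear_AONT ti to s M \<longleftrightarrow>
     M \<in> carrier_mat s s \<and> invertible_mat M \<and>
     (\<forall>I J. I \<subseteq> {0..<s} \<and> card I = ti \<and> J \<subseteq> {0..<s} \<and> card J = s - to \<longrightarrow>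
        (\<exists>c. \<forall>a b :: nat \<Rightarrow> 'a.
           card {x \<in> carrier_vec s. (\<forall>i\<in>I. x $ i = a i) \<and>
                   (\<forall>j\<in>J. row_times x (mat_inv_of M) $ j = b j)} = c))"

end

theory Submission
  imports Defs "Jordan_Normal_Form.Determinant" "HOL-Computational_Algebra.Polynomial"
begin

(* M is the Cauchy matrix (1 / (\<beta>_c - \<alpha>_r)) on 2s distinct field elements \<alpha>_r, \<beta>_c, which exist
   since q \<ge> 2s. Its square submatrices are nonsingular: if \<Sum>_r g_r / (X - \<alpha>_r) vanishes at as
   many points \<beta>_c as it has terms, then its numerator, a polynomial of smaller degree, is zero,
   and evaluating that numerator at \<alpha>_r gives g_r = 0.
   Writing y = x M^{-1} as x = y M, fix the outputs y_J. As s - |J| = t_o \<ge> t_i, there are t_i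
   further outputs R, and since M[R,I] is nonsingular, y_R can be chosen to give x_I any value.
   Hence x \<mapsto> (x_I, y_J) is a surjective linear map, and its fibres, the cosets of its kernel,
   all have the same size. *)

definition partial_fraction_numerator :: "('b \<Rightarrow> 'a::field) \<Rightarrow> ('b \<Rightarrow> 'a) \<Rightarrow> 'b set \<Rightarrow> 'a poly" where
  "partial_fraction_numerator v w B = (\<Sum>b\<in>B. smult (v b) (\<Prod>l\<in>B-{b}. [:- w l, 1:]))"

lemma degree_partial_fraction_numerator:
  assumes "finite B"
  shows "degree (partial_fraction_numerator v w B) \<le> card B - 1"
  unfolding partial_fraction_numerator_def
proof (rule degree_sum_le[OF assms])
  fix b assume b: "b \<in> B"
  have "degree (smult (v b) (\<Prod>l\<in>B-{b}. [:- w l, 1:])) \<le> degree (\<Prod>l\<in>B-{b}. [:- w l, 1:])"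
    by (rule degree_smult_le)
  also have "\<dots> \<le> sum (degree \<circ> (\<lambda>l. [:- w l, 1:])) (B-{b})"
    by (rule degree_prod_sum_le) (use assms in auto)
  also have "\<dots> = card B - 1"
    using b assms by simp
  finally show "degree (smult (v b) (\<Prod>l\<in>B-{b}. [:- w l, 1:])) \<le> card B - 1" .
qed

lemma poly_partial_fraction_numerator:
  assumes "finite B" and "x \<notin> w ` B"
  shows "poly (partial_fraction_numerator v w B) x = (\<Prod>l\<in>B. x - w l) * (\<Sum>b\<in>B. v b / (x - w b))"
proof -
  have "v b * (\<Prod>l\<in>B-{b}. x - w l) = (\<Prod>l\<in>B. x - w l) * (v b / (x - w b))" if b: "b \<in> B" for b
  proof -
    have "x - w b \<noteq> 0"
      using b assms(2) by auto
    then show ?thesis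
      unfolding prod.remove[OF assms(1) b, of "\<lambda>l. x - w l"] by (simp add: field_simps)
  qed
  then show ?thesis
    by (simp add: partial_fraction_numerator_def poly_sum poly_prod sum_distrib_left)
qed

lemma poly_partial_fraction_numerator_node:
  assumes "finite B" and "b \<in> B"
  shows "poly (partial_fraction_numerator v w B) (w b) = v b * (\<Prod>l\<in>B-{b}. w b - w l)"
proof -
  have "(\<Prod>l\<in>B-{b'}. w b - w l) = 0" if "b' \<in> B - {b}" for b'
    using that assms by (intro prod_zero) auto
  then have "(\<Sum>b'\<in>B-{b}. v b' * (\<Prod>l\<in>B-{b'}. w b - w l)) = 0"
    by simp
  then show ?thesis
    using sum.remove[OF assms, of "\<lambda>b'. v b' * (\<Prod>l\<in>B-{b'}. w b - w l)"]
    by (simp add: partial_fraction_numerator_def poly_sum poly_prod)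
qed

lemma partial_fractions_eq_0_imp_coeffs_eq_0:
  fixes v w :: "'b \<Rightarrow> 'a::field" and u :: "'c \<Rightarrow> 'a"
  assumes "finite A" and "finite B" and "card B \<le> card A"
    and "inj_on u A" and "inj_on w B" and "u ` A \<inter> w ` B = {}"
    and zero: "\<And>a. a \<in> A \<Longrightarrow> (\<Sum>b\<in>B. v b / (u a - w b)) = 0"
    and "b \<in> B"
  shows "v b = 0"
proof -
  define P where "P = partial_fraction_numerator v w B"
  have "P = 0"
  proof (rule ccontr)
    assume "P \<noteq> 0"
    have "poly P (u a) = 0" if "a \<in> A" for a
    proof -
      have "u a \<notin> w ` B"
        using assms(6) that by blast
      then show ?thesis
        using zero[OF that] by (simp add: P_def poly_partial_fraction_numerator[OF assms(2)])
    qed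
    then have "u ` A \<subseteq> {x. poly P x = 0}"
      by auto
    then have "card A \<le> card {x. poly P x = 0}"
      using card_mono[OF poly_roots_finite[OF \<open>P \<noteq> 0\<close>]] card_image[OF assms(4)] by metis
    also have "\<dots> \<le> degree P"
      by (rule card_poly_roots_bound[OF \<open>P \<noteq> 0\<close>])
    also have "\<dots> < card B"
    proof -
      have "card B > 0"
        using assms(2,8) card_gt_0_iff by blast
      then show ?thesis
        using degree_partial_fraction_numerator[OF assms(2), of v w] unfolding P_def by linarith
    qed
    finally show False
      using assms(3) by simp
  qed
  moreover have "(\<Prod>l\<in>B-{b}. w b - w l) \<noteq> 0"
    using assms(2,5,8) by (auto dest: inj_onD)
  ultimately show ?thesis
    using poly_partial_fraction_numerator_node[OF assms(2,8), of v w] by (simp add: P_def)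
qed

definition rows_independent_on :: "'a::semiring_0 mat \<Rightarrow> nat set \<Rightarrow> nat set \<Rightarrow> bool" where
  "rows_independent_on M R C \<longleftrightarrow>
     (\<forall>g. (\<forall>c\<in>C. (\<Sum>r\<in>R. g r * M $$ (r, c)) = 0) \<longrightarrow> (\<forall>r\<in>R. g r = 0))"

lemma rows_independent_onI:
  "(\<And>g r. (\<And>c. c \<in> C \<Longrightarrow> (\<Sum>r\<in>R. g r * M $$ (r, c)) = 0) \<Longrightarrow> r \<in> R \<Longrightarrow> g r = 0) \<Longrightarrow>
    rows_independent_on M R C"
  unfolding rows_independent_on_def by blast

lemma rows_independent_onD:
  "rows_independent_on M R C \<Longrightarrow> (\<And>c. c \<in> C \<Longrightarrow> (\<Sum>r\<in>R. g r * M $$ (r, c)) = 0) \<Longrightarrow> r \<in> R \<Longrightarrow>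
    g r = 0"
  unfolding rows_independent_on_def by blast

lemma rows_independent_on_solvable:
  fixes M :: "'a::{field, finite} mat"
  assumes "finite R" and "finite C" and "card R = card C" and "rows_independent_on M R C"
  shows "\<exists>g. \<forall>c\<in>C. (\<Sum>r\<in>R. g r * M $$ (r, c)) = d c"
proof -
  define \<phi> where "\<phi> g = restrict (\<lambda>c. \<Sum>r\<in>R. g r * M $$ (r, c)) C" for g
  have "inj_on \<phi> (R \<rightarrow>\<^sub>E UNIV)"
  proof (rule inj_onI)
    fix g h assume g: "g \<in> R \<rightarrow>\<^sub>E UNIV" and h: "h \<in> R \<rightarrow>\<^sub>E UNIV" and "\<phi> g = \<phi> h"
    have "(\<Sum>r\<in>R. (g r - h r) * M $$ (r, c)) = 0" if "c \<in> C" for c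
    proof -
      have "(\<Sum>r\<in>R. g r * M $$ (r, c)) = (\<Sum>r\<in>R. h r * M $$ (r, c))"
        using fun_cong[OF \<open>\<phi> g = \<phi> h\<close>, of c] that by (simp add: \<phi>_def)
      then show ?thesis
        by (simp add: left_diff_distrib sum_subtractf)
    qed
    then have "g r - h r = 0" if "r \<in> R" for r
      using rows_independent_onD[OF assms(4), of "\<lambda>r. g r - h r"] that by blast
    then show "g = h"
      using PiE_ext[OF g h] by simp
  qed
  moreover have "card (R \<rightarrow>\<^sub>E (UNIV :: 'a set)) = card (C \<rightarrow>\<^sub>E (UNIV :: 'a set))"
    using assms(1-3) by (simp add: card_PiE)
  ultimately have "card (\<phi> ` (R \<rightarrow>\<^sub>E UNIV)) = card (C \<rightarrow>\<^sub>E (UNIV :: 'a set))"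
    by (simp add: card_image)
  moreover have "\<phi> ` (R \<rightarrow>\<^sub>E UNIV) \<subseteq> C \<rightarrow>\<^sub>E UNIV"
    by (auto simp: \<phi>_def)
  moreover have "finite (C \<rightarrow>\<^sub>E (UNIV :: 'a set))"
    using assms(2) by (simp add: finite_PiE)
  ultimately have "\<phi> ` (R \<rightarrow>\<^sub>E UNIV) = C \<rightarrow>\<^sub>E UNIV"
    using card_subset_eq by blast
  moreover have "restrict d C \<in> C \<rightarrow>\<^sub>E UNIV"
    by simp
  ultimately obtain g where g: "\<phi> g = restrict d C"
    by (metis imageE)
  have "(\<Sum>r\<in>R. g r * M $$ (r, c)) = d c" if "c \<in> C" for c
    using fun_cong[OF g, of c] that by (simp add: \<phi>_def)
  then show ?thesis
    by blast
qed

lemma invertible_if_rows_independent_on: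
  fixes M :: "'a::field mat"
  assumes M: "M \<in> carrier_mat n n" and "rows_independent_on M {0..<n} {0..<n}"
  shows "invertible_mat M"
proof -
  have "v = 0\<^sub>v n" if v: "v \<in> carrier_vec n" and "transpose_mat M *\<^sub>v v = 0\<^sub>v n" for v
  proof -
    have "(\<Sum>r\<in>{0..<n}. v $ r * M $$ (r, c)) = 0" if "c \<in> {0..<n}" for c
      using arg_cong[OF \<open>transpose_mat M *\<^sub>v v = 0\<^sub>v n\<close>, of "\<lambda>x. x $ c"] that M v
      by (simp add: scalar_prod_def mult.commute)
    then show ?thesis
      using rows_independent_onD[OF assms(2), of "\<lambda>r. v $ r"] v by (auto intro!: eq_vecI)
  qed
  then have "det M \<noteq> 0"
    using det_0_iff_vec_prod_zero_field[of "transpose_mat M" n] det_transpose[OF M] M by auto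
  from det_non_zero_imp_unit[OF M this, of "()"]
  obtain B where "B \<in> carrier_mat n n" "M * B = 1\<^sub>m n" "B * M = 1\<^sub>m n"
    by (auto simp: Units_def ring_mat_def)
  then show ?thesis
    using M unfolding invertible_mat_def inverts_mat_def by auto
qed

definition cauchy_mat :: "nat \<Rightarrow> (nat \<Rightarrow> 'a::field) \<Rightarrow> (nat \<Rightarrow> 'a) \<Rightarrow> 'a mat" where
  "cauchy_mat n \<alpha> \<beta> = mat n n (\<lambda>(r, c). 1 / (\<beta> c - \<alpha> r))"

lemma cauchy_mat_rows_independent_on:
  assumes "inj_on \<alpha> {0..<n}" and "inj_on \<beta> {0..<n}" and "\<alpha> ` {0..<n} \<inter> \<beta> ` {0..<n} = {}"
    and R: "R \<subseteq> {0..<n}" and C: "C \<subseteq> {0..<n}" and "card R \<le> card C"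
  shows "rows_independent_on (cauchy_mat n \<alpha> \<beta>) R C"
proof (rule rows_independent_onI)
  fix g r assume zero: "\<And>c. c \<in> C \<Longrightarrow> (\<Sum>r\<in>R. g r * cauchy_mat n \<alpha> \<beta> $$ (r, c)) = 0" and "r \<in> R"
  show "g r = 0"
  proof (rule partial_fractions_eq_0_imp_coeffs_eq_0[where A = C and u = \<beta> and w = \<alpha>])
    show "finite C" "finite R" "card R \<le> card C" "r \<in> R"
      using R C finite_subset assms(6) \<open>r \<in> R\<close> by auto
    show "inj_on \<beta> C" "inj_on \<alpha> R"
      using inj_on_subset assms(1,2) R C by auto
    show "\<beta> ` C \<inter> \<alpha> ` R = {}"
      using assms(3) R C by blast
    fix c assume "c \<in> C"
    then show "(\<Sum>r\<in>R. g r / (\<beta> c - \<alpha> r)) = 0"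
      using zero R C by (auto simp: cauchy_mat_def subset_iff)
  qed
qed

lemma mat_inv_of:
  fixes M :: "'a::field mat"
  assumes M: "M \<in> carrier_mat n n" and "invertible_mat M"
  shows mat_inv_of_carrier: "mat_inv_of M \<in> carrier_mat n n"
    and mat_mult_mat_inv_of: "M * mat_inv_of M = 1\<^sub>m n"
proof -
  have "inverts_mat M (mat_inv_of M) \<and> inverts_mat (mat_inv_of M) M"
    unfolding mat_inv_of_def
    by (rule someI_ex) (use assms in \<open>auto simp: invertible_mat_def\<close>)
  then have MN: "M * mat_inv_of M = 1\<^sub>m n" and NM: "mat_inv_of M * M = 1\<^sub>m (dim_row (mat_inv_of M))"
    using M by (auto simp: inverts_mat_def)
  from MN show "M * mat_inv_of M = 1\<^sub>m n" .
  show "mat_inv_of M \<in> carrier_mat n n"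
    using arg_cong[OF MN, of dim_col] arg_cong[OF NM, of dim_col] M by auto
qed

lemma row_times_mat_inv_of:
  fixes M :: "'a::field mat"
  assumes M: "M \<in> carrier_mat n n" and "invertible_mat M" and y: "y \<in> carrier_vec n"
  shows "row_times (row_times y M) (mat_inv_of M) = y"
proof -
  have N: "mat_inv_of M \<in> carrier_mat n n"
    by (rule mat_inv_of_carrier[OF assms(1,2)])
  have "row_times (row_times y M) (mat_inv_of M) = (transpose_mat (mat_inv_of M) * transpose_mat M) *\<^sub>v y"
    unfolding row_times_def using M N y by (auto intro: assoc_mult_mat_vec[symmetric])
  also have "\<dots> = transpose_mat (M * mat_inv_of M) *\<^sub>v y"
    using transpose_mult[OF M N] by simp
  finally show ?thesis
    using mat_mult_mat_inv_of[OF assms(1,2)] y by simp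
qed

lemma row_times_add:
  "x \<in> carrier_vec (dim_row N) \<Longrightarrow> z \<in> carrier_vec (dim_row N) \<Longrightarrow>
     row_times (x + z) N = row_times x N + row_times z N"
  unfolding row_times_def by (rule mult_add_distrib_mat_vec) auto

lemma row_times_minus:
  "x \<in> carrier_vec (dim_row N) \<Longrightarrow> z \<in> carrier_vec (dim_row N) \<Longrightarrow>
     row_times (x - z) N = row_times x N - row_times z N"
  unfolding row_times_def by (rule mult_minus_distrib_mat_vec) auto

definition aont_fibre ::
    "nat \<Rightarrow> nat set \<Rightarrow> nat set \<Rightarrow> 'a::field mat \<Rightarrow> (nat \<Rightarrow> 'a) \<Rightarrow> (nat \<Rightarrow> 'a) \<Rightarrow> 'a vec set" where
  "aont_fibre s I J N a b =
     {x \<in> carrier_vec s. (\<forall>i\<in>I. x $ i = a i) \<and> (\<forall>j\<in>J. row_times x N $ j = b j)}"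

lemma card_aont_fibre_eq_kernel:
  assumes N: "N \<in> carrier_mat s n" and I: "I \<subseteq> {0..<s}" and J: "J \<subseteq> {0..<n}"
    and x0: "x0 \<in> aont_fibre s I J N a b"
  shows "card (aont_fibre s I J N a b) = card (aont_fibre s I J N (\<lambda>_. 0) (\<lambda>_. 0))"
proof -
  have x0c: "x0 \<in> carrier_vec s"
    using x0 by (simp add: aont_fibre_def)
  have dim: "dim_vec (row_times x N) = n" for x
    using N by (simp add: row_times_def)
  have "x - x0 \<in> aont_fibre s I J N (\<lambda>_. 0) (\<lambda>_. 0)" if x: "x \<in> aont_fibre s I J N a b" for x
  proof -
    have "x \<in> carrier_vec s"
      using x by (simp add: aont_fibre_def)
    then show ?thesis
      using x x0 x0c N I J dim[of x0] by (auto simp: aont_fibre_def row_times_minus subset_iff)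
  qed
  moreover have "z + x0 \<in> aont_fibre s I J N a b" if z: "z \<in> aont_fibre s I J N (\<lambda>_. 0) (\<lambda>_. 0)" for z
  proof -
    have "z \<in> carrier_vec s"
      using z by (simp add: aont_fibre_def)
    then show ?thesis
      using z x0 x0c N I J dim[of x0] by (auto simp: aont_fibre_def row_times_add subset_iff)
  qed
  ultimately have "bij_betw (\<lambda>x. x - x0) (aont_fibre s I J N a b) (aont_fibre s I J N (\<lambda>_. 0) (\<lambda>_. 0))"
    using x0c by (intro bij_betw_byWitness[where f' = "\<lambda>z. z + x0"]) (auto simp: aont_fibre_def)
  then show ?thesis
    by (rule bij_betw_same_card)
qed

lemma aont_fibre_nonempty:
  fixes M :: "'a::{field, finite} mat"
  assumes M: "M \<in> carrier_mat s s" and "invertible_mat M"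
    and I: "I \<subseteq> {0..<s}" and J: "J \<subseteq> {0..<s}" and R: "R \<subseteq> {0..<s} - J"
    and "card R = card I" and "rows_independent_on M R I"
  shows "aont_fibre s I J (mat_inv_of M) a b \<noteq> {}"
proof -
  have "finite I" "finite R"
    using finite_subset[OF I] finite_subset[OF R] by auto
  then obtain g where g: "\<And>i. i \<in> I \<Longrightarrow> (\<Sum>r\<in>R. g r * M $$ (r, i)) = a i - (\<Sum>j\<in>J. b j * M $$ (j, i))"
    using rows_independent_on_solvable[of R I M "\<lambda>i. a i - (\<Sum>j\<in>J. b j * M $$ (j, i))"] assms(6,7)
    by blast
  define y where "y = vec s (\<lambda>r. if r \<in> J then b r else if r \<in> R then g r else 0)"
  have y: "y \<in> carrier_vec s"
    by (simp add: y_def)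
  have "row_times y M $ i = a i" if i: "i \<in> I" for i
  proof -
    have "row_times y M $ i = (\<Sum>r\<in>{0..<s}. y $ r * M $$ (r, i))"
      using i I M y by (auto simp: row_times_def scalar_prod_def mult.commute)
    also have "\<dots> = (\<Sum>r\<in>J \<union> R. y $ r * M $$ (r, i))"
      by (rule sum.mono_neutral_right) (use J R in \<open>auto simp: y_def\<close>)
    also have "\<dots> = (\<Sum>r\<in>J. y $ r * M $$ (r, i)) + (\<Sum>r\<in>R. y $ r * M $$ (r, i))"
      by (rule sum.union_disjoint) (use J R \<open>finite R\<close> finite_subset in auto)
    also have "\<dots> = (\<Sum>r\<in>J. b r * M $$ (r, i)) + (\<Sum>r\<in>R. g r * M $$ (r, i))"
      by (intro arg_cong2[where f = "(+)"] sum.cong) (use J R in \<open>auto simp: y_def\<close>)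
    finally show ?thesis
      using g[OF i] by simp
  qed
  moreover have "row_times (row_times y M) (mat_inv_of M) $ j = b j" if "j \<in> J" for j
    using row_times_mat_inv_of[OF M assms(2) y] that J by (auto simp: y_def)
  moreover have "row_times y M \<in> carrier_vec s"
    using M unfolding row_times_def by (intro carrier_vecI) simp
  ultimately show ?thesis
    unfolding aont_fibre_def by blast
qed

lemma linear_AONT_if_rows_independent_on:
  fixes M :: "'a::{field, finite} mat"
  assumes M: "M \<in> carrier_mat s s" and "invertible_mat M" and "ti \<le> to" and "to \<le> s"
    and indep: "\<And>R C. R \<subseteq> {0..<s} \<Longrightarrow> C \<subseteq> {0..<s} \<Longrightarrow> card R = ti \<Longrightarrow> card C = ti \<Longrightarrow>
      rows_independent_on M R C"
  shows "linear_AONT ti to s M"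
  unfolding linear_AONT_def
proof (intro conjI assms allI impI)
  fix I J assume IJ: "I \<subseteq> {0..<s} \<and> card I = ti \<and> J \<subseteq> {0..<s} \<and> card J = s - to"
  have "finite J"
    using IJ finite_subset by blast
  then have "card ({0..<s} - J) = to"
    using IJ assms(4) by (simp add: card_Diff_subset)
  then obtain R where R: "R \<subseteq> {0..<s} - J" "card R = ti"
    using obtain_subset_with_card_n[of ti "{0..<s} - J"] assms(3) by auto
  have "card (aont_fibre s I J (mat_inv_of M) a b) =
      card (aont_fibre s I J (mat_inv_of M) (\<lambda>_. 0) (\<lambda>_. 0))" for a b
  proof -
    have "R \<subseteq> {0..<s}"
      using R(1) by blast
    then have "rows_independent_on M R I"
      using indep R(2) IJ by simp
    then obtain x0 where "x0 \<in> aont_fibre s I J (mat_inv_of M) a b"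
      using aont_fibre_nonempty[OF M assms(2), of I J R a b] R IJ by auto
    then show ?thesis
      using card_aont_fibre_eq_kernel[OF mat_inv_of_carrier[OF M assms(2)], of I J x0 a b] IJ by simp
  qed
  then show "\<exists>c. \<forall>a b. card {x \<in> carrier_vec s. (\<forall>i\<in>I. x $ i = a i) \<and>
      (\<forall>j\<in>J. row_times x (mat_inv_of M) $ j = b j)} = c"
    unfolding aont_fibre_def by (intro exI allI)
qed

theorem mainTheorem10:
  fixes s ti to :: nat
  assumes "card (UNIV :: 'a set) \<ge> 2 * s"
    and "1 \<le> ti" and "ti \<le> to" and "to \<le> s"
  shows "\<exists>M :: ('a :: {field, finite}) mat. linear_AONT ti to s M"
proof -
  obtain f :: "nat + nat \<Rightarrow> 'a" where f: "inj_on f ({0..<s} <+> {0..<s})"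
    using card_le_inj[of "{0..<s} <+> {0..<s}" "UNIV :: 'a set"] assms(1) by (auto simp: card_Plus)
  have nodes: "inj_on (f \<circ> Inl) {0..<s}" "inj_on (f \<circ> Inr) {0..<s}"
      "(f \<circ> Inl) ` {0..<s} \<inter> (f \<circ> Inr) ` {0..<s} = {}"
    using f by (auto simp: inj_on_def)
  let ?M = "cauchy_mat s (f \<circ> Inl) (f \<circ> Inr)"
  have M: "?M \<in> carrier_mat s s"
    by (simp add: cauchy_mat_def)
  have "invertible_mat ?M"
    by (rule invertible_if_rows_independent_on[OF M cauchy_mat_rows_independent_on[OF nodes]]) auto
  moreover have "rows_independent_on ?M R C"
    if "R \<subseteq> {0..<s}" "C \<subseteq> {0..<s}" "card R = ti" "card C = ti" for R C
    using cauchy_mat_rows_independent_on[OF nodes that(1,2)] that(3,4) by simp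
  ultimately have "linear_AONT ti to s ?M"
    by (rule linear_AONT_if_rows_independent_on[OF M _ assms(3,4)])
  then show ?thesis ..
qed

end
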